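(* Let $K$ be a field of characteristic zero and let $f(x,y)=\sum_{m,n\ge 0} f_{m,n}\frac{x^m y^n}{m!\,n!}\in K[[x,y]]$ with $f_{0,0}=0$ and $f_{0,1}\neq 0$. Let $y(x)=\sum_{n\ge1} y_n\frac{x^n}{n!}\in K[[x]]$ be the unique formal power series with zero constant term such that $f(x,y(x))=0$. For $k\ge1$ and $j\ge0$ let $a_{k,j}\in K$ be defined by $$A_{k,1}(\varphi_1(x),\dots,\varphi_k(x))=\sum_{j\ge0} a_{k,j}\frac{x^j}{j!},$$ where $\varphi_n(x)=\sum_{m\ge0} f_{m,n}\frac{x^m}{m!}$. Then for every $m\ge1$, $$y_m=\sum_{n=1}^{m}\binom{m}{n}\sum_{k=1}^{n}(-1)^k\,a_{k,m-n}\,B_{n,k}(f_{1,0},f_{2,0},\dots,f_{n-k+1,0}).$$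
   Context: $B_{n,k}$ denotes the partial (exponential) Bell polynomial, defined by $\frac{1}{k!}\big(\sum_{i\ge1}X_i\frac{t^i}{i!}\big)^k=\sum_{n\ge k}B_{n,k}(X_1,\dots,X_{n-k+1})\frac{t^n}{n!}$ (with $B_{0,0}=1$, $B_{n,0}=0$ for $n>0$). $A_{n,1}$ is the polynomial in $X_1^{-1},X_1,\dots,X_n$ given by $$A_{n,1}=X_1^{-(2n-1)}\sum \frac{(-1)^{n-1-r_1}(2n-2-r_1)!}{r_2!\cdots r_n!\,(2!)^{r_2}\cdots(n!)^{r_n}}X_1^{r_1}X_2^{r_2}\cdots X_n^{r_n},$$ the sum running over all sequences $(r_1,\dots,r_n)$ of nonnegative integers with $r_1+\dots+r_n=n-1$ and $r_1+2r_2+\dots+nr_n=2n-2$. Equivalently, $A_{n,1}(X_1,\dots,X_n)$ is the $n$-th Taylor coefficient (coefficient of $y^n/n!$) of the compositional inverse of the series $\sum_{n\ge1}X_n\frac{y^n}{n!}$. Since $\varphi_1(0)=f_{0,1}\ne0$, $\varphi_1(x)$ is invertible in $K[[x]]$, so $A_{k,1}(\varphi_1,\dots,\varphi_k)$ is a well-defined element of $K[[x]]$. *)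

theory Defs
  imports "HOL-Computational_Algebra.Formal_Power_Series"
begin

definition efps :: "(nat \<Rightarrow> 'a::field_char_0) \<Rightarrow> 'a fps" where
  "efps c = Abs_fps (\<lambda>n. c n / fact n)"

definition bell_poly :: "nat \<Rightarrow> nat \<Rightarrow> (nat \<Rightarrow> 'a::field_char_0) \<Rightarrow> 'a" where
  "bell_poly n k X = fact n / fact k *
     fps_nth ((Abs_fps (\<lambda>i. if i = 0 then 0 else X i / fact i)) ^ k) n"

definition A_idx :: "nat \<Rightarrow> (nat \<Rightarrow> nat) set" where
  "A_idx n = {r. (\<forall>i. i \<notin> {1..n} \<longrightarrow> r i = 0) \<and>
                 (\<Sum>i=1..n. r i) = n - 1 \<and> (\<Sum>i=1..n. i * r i) = 2 * n - 2}"

text \<open>The polynomial \<open>A_{n,1}\<close> in \<open>X_1^{-1}, X_1, \<dots>, X_n\<close>, evaluated in \<open>K[[x]]\<close> (\<open>X_1\<close> invertible).\<close>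
definition A1 :: "nat \<Rightarrow> (nat \<Rightarrow> 'a::field_char_0 fps) \<Rightarrow> 'a fps" where
  "A1 n X = inverse (X 1) ^ (2 * n - 1) *
     (\<Sum>r\<in>A_idx n.
        fps_const ((-1) ^ (n - 1 - r 1) * fact (2 * n - 2 - r 1) /
                   (\<Prod>i=2..n. fact (r i) * fact i ^ r i))
        * (\<Prod>i=1..n. X i ^ r i))"

definition phi :: "(nat \<Rightarrow> nat \<Rightarrow> 'a::field_char_0) \<Rightarrow> nat \<Rightarrow> 'a fps" where
  "phi F n = efps (\<lambda>m. F m n)"

text \<open>Substitution \<open>f(x, y(x)) = \<Sum>_n \<phi>_n(x) y(x)^n / n!\<close> for \<open>y\<close> with zero constant term
  (the coefficient of \<open>x^j\<close> only involves \<open>n \<le> j\<close>).\<close>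
definition subst2 :: "(nat \<Rightarrow> nat \<Rightarrow> 'a::field_char_0) \<Rightarrow> 'a fps \<Rightarrow> 'a fps" where
  "subst2 F Y = Abs_fps (\<lambda>j. \<Sum>n\<le>j. fps_nth (phi F n * Y ^ n * fps_const (inverse (fact n))) j)"

definition a_coeff :: "(nat \<Rightarrow> nat \<Rightarrow> 'a::field_char_0) \<Rightarrow> nat \<Rightarrow> nat \<Rightarrow> 'a" where
  "a_coeff F k j = fact j * fps_nth (A1 k (phi F)) j"

end

(*
  Put G(y) = \<Sum>_{k\<ge>1} \<phi>_k y^k/k! \<in> K[[x]][[y]]. Then f(x, y) = \<phi>_0 + G(y), so the hypothesis
  says G(y(x)) = -\<phi>_0(x), and y(x) = h(-\<phi>_0(x)) for the compositional inverse h of G in y.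
  Lagrange inversion gives k h_k = [y^(k-1)] (G/y)^(-k); expanding (G/y)^(-k) = (\<phi>_1 + B)^(-k) by the
  negative binomial series and B^s by the multinomial theorem produces exactly A_{k,1}(\<phi>_1, \<dots>, \<phi>_k),
  i.e. h_k = A_{k,1}/k!. Finally the coefficient of x^m in \<Sum>_k h_k (-\<phi>_0)^k is read off with
  (\<phi>_0^k)_n = k!/n! B_{n,k}(f_{1,0}, f_{2,0}, \<dots>), which holds because f_{0,0} = 0.
*)
theory Submission
  imports Defs
begin

unbundle fps_syntax

fun comp_inverse_coeff :: "'b::comm_ring_1 fps \<Rightarrow> 'b \<Rightarrow> nat \<Rightarrow> 'b" where
  "comp_inverse_coeff a u 0 = 0"
| "comp_inverse_coeff a u (Suc n) =
     (fps_X $ Suc n - (\<Sum>i=0..n. comp_inverse_coeff a u i * (a ^ i) $ Suc n)) * u ^ Suc n"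

text \<open>The recursion behind \<open>fps_inv\<close>, with an inverse \<open>u\<close> of \<open>a $ 1\<close> passed explicitly, so that
  the coefficients need only form a commutative ring (they will be power series themselves).\<close>
definition fps_comp_inverse :: "'b::comm_ring_1 fps \<Rightarrow> 'b \<Rightarrow> 'b fps" where
  "fps_comp_inverse a u = Abs_fps (comp_inverse_coeff a u)"

lemma fps_comp_inverse_nth_0 [simp]: "fps_comp_inverse a u $ 0 = 0"
  by (simp add: fps_comp_inverse_def)

lemma fps_comp_inverse_left:
  fixes a :: "'b::comm_ring_1 fps"
  assumes a0: "a $ 0 = 0" and au: "a $ 1 * u = 1"
  shows "fps_comp_inverse a u oo a = fps_X"
proof (rule fps_ext)
  fix n
  let ?c = "comp_inverse_coeff a u"
  show "(fps_comp_inverse a u oo a) $ n = fps_X $ n"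
  proof (cases n)
    case 0
    then show ?thesis using a0 by (simp add: fps_compose_nth fps_comp_inverse_def)
  next
    case (Suc n')
    have "(fps_comp_inverse a u oo a) $ n = (\<Sum>i=0..n'. ?c i * (a ^ i) $ n) + ?c n * (a $ 1) ^ n"
      by (simp add: fps_compose_nth fps_comp_inverse_def Suc startsby_zero_power_nth_same[OF a0]
          del: power_Suc)
    also have "?c n * (a $ 1) ^ n = (fps_X $ n - (\<Sum>i=0..n'. ?c i * (a ^ i) $ n)) * (u * a $ 1) ^ n"
      by (simp add: Suc power_mult_distrib del: power_Suc)
    finally show ?thesis using au by (simp add: mult.commute)
  qed
qed

lemma fps_comp_inverse_right:
  fixes a :: "'b::idom fps"
  assumes a0: "a $ 0 = 0" and au: "a $ 1 * u = 1"
  shows "a oo fps_comp_inverse a u = fps_X"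
proof -
  let ?h = "fps_comp_inverse a u"
  let ?k = "fps_comp_inverse ?h (a $ 1)"
  have kh: "?k oo ?h = fps_X"
    by (rule fps_comp_inverse_left) (use au in \<open>simp_all add: fps_comp_inverse_def mult.commute\<close>)
  have "?k = ?k oo (?h oo a)" by (simp add: fps_comp_inverse_left[OF a0 au])
  also have "\<dots> = (?k oo ?h) oo a" by (rule fps_compose_assoc) (simp_all add: a0)
  also have "\<dots> = a" unfolding kh using a0 by simp
  finally show ?thesis using kh by simp
qed

lemma fps_mult_nth_cong:
  assumes "\<And>k. k \<le> N \<Longrightarrow> A $ k = B $ k"
  shows "(P * A) $ N = (P * B) $ N"
  unfolding fps_mult_nth by (intro sum.cong) (auto simp: assms)

lemma fps_mult_compose_nth:
  fixes h :: "'b::comm_ring_1 fps"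
  assumes h0: "h $ 0 = 0"
  shows "(P * (c oo h)) $ N = (\<Sum>j=0..N. c $ j * (P * h ^ j) $ N)"
proof -
  have "(P * (c oo h)) $ N = (P * (\<Sum>j=0..N. fps_const (c $ j) * h ^ j)) $ N"
  proof (rule fps_mult_nth_cong)
    fix k assume "k \<le> N"
    then have "(c oo h) $ k = (\<Sum>j=0..N. c $ j * (h ^ j) $ k)"
      unfolding fps_compose_nth
      by (intro sum.mono_neutral_left) (use startsby_zero_power_prefix[OF h0] in auto)
    then show "(c oo h) $ k = (\<Sum>j=0..N. fps_const (c $ j) * h ^ j) $ k"
      by (simp add: fps_sum_nth)
  qed
  also have "\<dots> = (\<Sum>j=0..N. (fps_const (c $ j) * (P * h ^ j)) $ N)"
    by (simp add: sum_distrib_left fps_sum_nth mult.left_commute)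
  finally show ?thesis by simp
qed

text \<open>The residue computation of Lagrange inversion: for \<open>m > 1\<close>, \<open>(z\<^sup>m\<^sup>-\<^sup>1)' = -(m-1) w' z\<^sup>m\<close> turns
  \<open>(m-1) (X w)' z\<^sup>m\<close> into \<open>(m-1) P - X P'\<close> with \<open>P = z\<^sup>m\<^sup>-\<^sup>1\<close>, whose coefficient at \<open>m - 1\<close> vanishes.\<close>
lemma fps_deriv_X_mult_residue:
  fixes w z :: "'b::{idom,semiring_char_0} fps"
  assumes wz: "w * z = 1" and m: "m > 0"
  shows "(fps_deriv (fps_X * w) * z ^ m) $ (m - 1) = (if m = 1 then 1 else 0)"
proof -
  have decomp: "fps_deriv (fps_X * w) * z ^ m = z ^ (m - 1) + fps_X * (fps_deriv w * z ^ m)"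
  proof -
    have "w * z ^ m = z ^ (m - 1)"
      using m wz by (cases m) (simp_all add: mult.assoc[symmetric])
    then show ?thesis by (simp add: algebra_simps)
  qed
  show ?thesis
  proof (cases "m = 1")
    case True
    then show ?thesis unfolding decomp by simp
  next
    case False
    then obtain k where k: "m = Suc (Suc k)" using m by (metis One_nat_def Suc_pred not0_implies_Suc)
    have dz: "fps_deriv z = - fps_deriv w * z ^ 2"
    proof -
      have "w * fps_deriv z + fps_deriv w * z = 0"
        using arg_cong[OF wz, of fps_deriv] by (simp add: algebra_simps)
      then have "z * (w * fps_deriv z + fps_deriv w * z) = 0" by simp
      then have "(w * z) * fps_deriv z + fps_deriv w * z ^ 2 = 0"
        by (simp add: algebra_simps power2_eq_square)
      then show ?thesis using wz by (simp add: eq_neg_iff_add_eq_0)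
    qed
    have "fps_deriv (z ^ Suc k) = of_nat (Suc k) * fps_deriv z * z ^ k"
      using fps_deriv_power'[of z "Suc k"] by simp
    also have "\<dots> = - (of_nat (Suc k) * (fps_deriv w * (z ^ 2 * z ^ k)))"
      by (simp add: dz algebra_simps)
    also have "z ^ 2 * z ^ k = z ^ m" by (simp add: k power_add[symmetric])
    finally have dP: "fps_deriv (z ^ Suc k) = - (of_nat (Suc k) * (fps_deriv w * z ^ m))" .
    have eq: "of_nat (Suc k) * (fps_deriv (fps_X * w) * z ^ m) =
        of_nat (Suc k) * z ^ Suc k - fps_X * fps_deriv (z ^ Suc k)"
      unfolding decomp dP using k by (simp add: algebra_simps)
    have "(of_nat (Suc k) * P - fps_X * fps_deriv P) $ Suc k = 0" for P :: "'b fps"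
      by (simp add: fps_of_nat del: of_nat_Suc)
    then have "(of_nat (Suc k) * (fps_deriv (fps_X * w) * z ^ m)) $ Suc k = 0"
      unfolding eq .
    then have "of_nat (Suc k) * (fps_deriv (fps_X * w) * z ^ m) $ (m - 1) = 0"
      using k by (simp add: fps_of_nat del: of_nat_Suc)
    then show ?thesis using False by (simp del: of_nat_Suc)
  qed
qed

lemma fps_lagrange_inversion:
  fixes G U V h :: "'b::{idom,semiring_char_0} fps"
  assumes GU: "G = fps_X * U" and UV: "U * V = 1" and h0: "h $ 0 = 0"
    and Gh: "G oo h = fps_X" and n: "n > 0"
  shows "of_nat n * h $ n = (V ^ n) $ (n - 1)"
proof -
  define w where "w = Abs_fps (\<lambda>k. h $ (k + 1))"
  have hw: "h = fps_X * w"
    by (rule fps_ext) (simp add: w_def h0)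
  define z where "z = U oo h"
  have "fps_X * (w * z) = fps_X * 1"
    using Gh unfolding GU fps_compose_mult_distrib[OF h0] fps_X_fps_compose_startby0[OF h0] z_def
    by (simp add: hw mult.assoc)
  then have wz: "w * z = 1" by simp
  have "z * (V oo h) = 1"
    unfolding z_def fps_compose_mult_distrib[OF h0, symmetric] UV by simp
  then have Vh: "V oo h = w"
    by (metis mult.assoc mult.commute mult_1_right wz)
  have zw_power: "z ^ j * w ^ j = 1" for j
    by (simp add: power_mult_distrib[symmetric] mult.commute wz)
  have e: "fps_deriv h * z ^ n * (V ^ n oo h) = fps_deriv h"
    using zw_power[of n] by (simp add: fps_compose_power[OF h0, symmetric] Vh mult.assoc)
  have d: "fps_deriv h $ (n - 1) = of_nat n * h $ n"
    using n by simp
  have "of_nat n * h $ n = (fps_deriv h * z ^ n * (V ^ n oo h)) $ (n - 1)"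
    by (simp only: e d)
  also have "\<dots> = (\<Sum>j=0..n-1. (V ^ n) $ j * (fps_deriv h * z ^ n * h ^ j) $ (n - 1))"
    by (rule fps_mult_compose_nth[OF h0])
  also have "\<dots> = (\<Sum>j=0..n-1. if j = n - 1 then (V ^ n) $ j else 0)"
  proof (intro sum.cong refl)
    fix j assume j: "j \<in> {0..n-1}"
    have "fps_deriv h * z ^ n * h ^ j
        = fps_X ^ j * (fps_deriv (fps_X * w) * z ^ (n - j)) * (z ^ j * w ^ j)"
      using j n by (simp add: hw algebra_simps power_add[symmetric])
    then have "(fps_deriv h * z ^ n * h ^ j) $ (n - 1)
        = (fps_deriv (fps_X * w) * z ^ (n - j)) $ (n - j - 1)"
      using j n by (simp add: zw_power fps_X_power_mult_nth)
    also have "\<dots> = (if n - j = 1 then 1 else 0)"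
      using fps_deriv_X_mult_residue[OF wz, of "n - j"] j n by simp
    finally show "(V ^ n) $ j * (fps_deriv h * z ^ n * h ^ j) $ (n - 1)
        = (if j = n - 1 then (V ^ n) $ j else 0)"
      using j n by auto
  qed
  also have "\<dots> = (V ^ n) $ (n - 1)" by simp
  finally show ?thesis .
qed

text \<open>If \<open>Y $ 0 = 0\<close>, only the
  terms with \<open>j \<le> m\<close> contribute to the coefficient of \<open>x\<^sup>m\<close>.\<close>
definition fps_eval_at :: "'b::comm_ring_1 fps fps \<Rightarrow> 'b fps \<Rightarrow> 'b fps" where
  "fps_eval_at P Y = Abs_fps (\<lambda>m. (\<Sum>j=0..m. P $ j * Y ^ j) $ m)"

lemma fps_mult_power_nth_eq_0:
  fixes Y :: "'b::comm_ring_1 fps"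
  assumes Y0: "Y $ 0 = 0" and "m < j"
  shows "(A * Y ^ j) $ m = 0"
  unfolding fps_mult_nth
  by (rule sum.neutral) (use assms startsby_zero_power_prefix[OF Y0] in auto)

lemma fps_eval_at_nth:
  fixes Y :: "'b::comm_ring_1 fps"
  assumes Y0: "Y $ 0 = 0" and "m \<le> N"
  shows "fps_eval_at P Y $ m = (\<Sum>j=0..N. P $ j * Y ^ j) $ m"
  unfolding fps_eval_at_def fps_sum_nth
  by (simp, rule sum.mono_neutral_left) (use assms fps_mult_power_nth_eq_0[OF Y0] in auto)

lemma fps_eval_at_1 [simp]: "fps_eval_at 1 Y = 1"
  by (rule fps_ext) (simp add: fps_eval_at_def fps_sum_nth sum.atLeast_Suc_atMost)

lemma fps_eval_at_X:
  fixes Y :: "'b::comm_ring_1 fps"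
  assumes "Y $ 0 = 0"
  shows "fps_eval_at fps_X Y = Y"
proof (rule fps_ext)
  fix m show "fps_eval_at fps_X Y $ m = Y $ m"
    using assms by (cases m) (simp_all add: fps_eval_at_def fps_sum_nth sum.atLeast_Suc_atMost)
qed

lemma fps_eval_at_mult:
  fixes Y :: "'b::comm_ring_1 fps"
  assumes Y0: "Y $ 0 = 0"
  shows "fps_eval_at (P * Q) Y = fps_eval_at P Y * fps_eval_at Q Y"
proof (rule fps_ext)
  fix m
  let ?T = "\<lambda>P. \<Sum>j=0..m. P $ j * Y ^ j"
  let ?c = "\<lambda>(j, l). (P $ j * Q $ l * Y ^ (j + l)) $ m"
  have "(fps_eval_at P Y * fps_eval_at Q Y) $ m = (?T P * ?T Q) $ m"
    unfolding fps_mult_nth by (intro sum.cong refl) (simp add: fps_eval_at_nth[OF Y0, where N = m])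
  also have "\<dots> = (\<Sum>x\<in>{0..m} \<times> {0..m}. ?c x)"
    by (simp add: sum_product power_add algebra_simps sum.cartesian_product fps_sum_nth
        case_prod_unfold)
  also have "\<dots> = (\<Sum>x\<in>{(j, l). j + l \<le> m}. ?c x)"
    by (rule sum.mono_neutral_right)
      (auto intro: fps_mult_power_nth_eq_0[OF Y0] simp: not_le)
  also have "\<dots> = (\<Sum>k\<le>m. \<Sum>j\<le>k. (P $ j * Q $ (k - j) * Y ^ (j + (k - j))) $ m)"
    by (rule sum.triangle_reindex_eq)
  also have "\<dots> = (\<Sum>k\<le>m. ((P * Q) $ k * Y ^ k) $ m)"
    unfolding fps_mult_nth sum_distrib_right fps_sum_nth by (intro sum.cong) auto
  also have "\<dots> = fps_eval_at (P * Q) Y $ m"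
    by (simp add: fps_eval_at_def fps_sum_nth atLeast0AtMost)
  finally show "fps_eval_at (P * Q) Y $ m = (fps_eval_at P Y * fps_eval_at Q Y) $ m" ..
qed

lemma fps_eval_at_power:
  fixes Y :: "'b::comm_ring_1 fps"
  assumes "Y $ 0 = 0"
  shows "fps_eval_at (P ^ k) Y = fps_eval_at P Y ^ k"
  by (induction k) (simp_all add: fps_eval_at_mult[OF assms])

lemma fps_eval_at_compose:
  fixes Y :: "'b::comm_ring_1 fps"
  assumes Y0: "Y $ 0 = 0" and b0: "b $ 0 = 0"
  shows "fps_eval_at (a oo b) Y = fps_eval_at a (fps_eval_at b Y)"
proof (rule fps_ext)
  fix m
  let ?E = "fps_eval_at b Y"
  have "fps_eval_at a ?E $ m = (\<Sum>i=0..m. (a $ i * ?E ^ i) $ m)"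
    by (simp add: fps_eval_at_def fps_sum_nth)
  also have "\<dots> = (\<Sum>i=0..m. (a $ i * (\<Sum>j=0..m. (b ^ i) $ j * Y ^ j)) $ m)"
  proof (intro sum.cong refl fps_mult_nth_cong)
    fix i k assume "k \<le> m"
    then show "(?E ^ i) $ k = (\<Sum>j=0..m. (b ^ i) $ j * Y ^ j) $ k"
      by (simp add: fps_eval_at_power[OF Y0, symmetric] fps_eval_at_nth[OF Y0])
  qed
  also have "\<dots> = (\<Sum>j=0..m. \<Sum>i=0..m. (a $ i * (b ^ i) $ j * Y ^ j) $ m)"
    by (subst sum.swap) (simp add: sum_distrib_left fps_sum_nth mult.assoc)
  also have "\<dots> = (\<Sum>j=0..m. \<Sum>i=0..j. (a $ i * (b ^ i) $ j * Y ^ j) $ m)"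
    by (intro sum.cong refl sum.mono_neutral_right) (use startsby_zero_power_prefix[OF b0] in auto)
  also have "\<dots> = fps_eval_at (a oo b) Y $ m"
    by (simp add: fps_eval_at_def fps_sum_nth fps_compose_nth sum_distrib_right)
  finally show "fps_eval_at (a oo b) Y $ m = fps_eval_at a ?E $ m" ..
qed

text \<open>Multiplicity vectors \<open>(r\<^sub>1, \<dots>, r\<^sub>L)\<close> of the partitions of \<open>N\<close> into \<open>s\<close> parts of size at
  most \<open>L\<close>; \<open>A_idx n\<close> is the case \<open>L = n\<close>, \<open>s = n - 1\<close>, \<open>N = 2n - 2\<close>.\<close>
definition multiplicities :: "nat \<Rightarrow> nat \<Rightarrow> nat \<Rightarrow> (nat \<Rightarrow> nat) set" where
  "multiplicities L s N = {r. (\<forall>i. i \<notin> {1..L} \<longrightarrow> r i = 0) \<and>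
     (\<Sum>i=1..L. r i) = s \<and> (\<Sum>i=1..L. i * r i) = N}"

lemma finite_multiplicities: "finite (multiplicities L s N)"
proof (rule finite_subset)
  show "multiplicities L s N \<subseteq> {r. \<forall>i. (i \<in> {1..L} \<longrightarrow> r i \<in> {0..s}) \<and> (i \<notin> {1..L} \<longrightarrow> r i = 0)}"
    using member_le_sum[of _ "{1..L}"] by (fastforce simp: multiplicities_def)
  show "finite {r. \<forall>i. (i \<in> {1..L} \<longrightarrow> r i \<in> {0..s}) \<and> (i \<notin> {1..L} \<longrightarrow> r i = (0::nat))}"
    by (rule finite_set_of_finite_funs) auto
qed

lemma multiplicities_0: "multiplicities L 0 N = (if N = 0 then {\<lambda>_. 0} else {})"
  by (auto simp: multiplicities_def fun_eq_iff) (metis atLeastAtMost_iff)+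

lemma fun_upd_Suc_in_multiplicities_iff:
  assumes k: "k \<in> {1..L}"
  shows "r(k := Suc (r k)) \<in> multiplicities L (Suc s) (N + k) \<longleftrightarrow> r \<in> multiplicities L s N"
proof -
  have "(\<Sum>i=1..L. g i ((r(k := Suc (r k))) i)) = g k (Suc (r k)) + (\<Sum>i\<in>{1..L}-{k}. g i (r i))"
    and "(\<Sum>i=1..L. g i (r i)) = g k (r k) + (\<Sum>i\<in>{1..L}-{k}. g i (r i))" for g :: "nat \<Rightarrow> nat \<Rightarrow> nat"
    using k by (simp_all add: sum.remove)
  from this[of "\<lambda>i j. j"] this[of "\<lambda>i j. i * j"] show ?thesis
    using k by (auto simp: multiplicities_def)
qed

lemma sum_multiplicities_support:
  assumes "r \<in> multiplicities L s N"
  shows "(\<Sum>k\<in>{k \<in> {1..L}. 0 < r k}. r k) = s"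
proof -
  have "(\<Sum>k\<in>{k \<in> {1..L}. 0 < r k}. r k) = (\<Sum>k=1..L. r k)"
    by (rule sum.mono_neutral_left) auto
  also have "\<dots> = s" using assms by (simp add: multiplicities_def)
  finally show ?thesis .
qed

text \<open>Removing one part of size \<open>k\<close>: the bijection behind \<open>(B\<^sup>s\<^sup>+\<^sup>1)\<^sub>N = \<Sum>\<^sub>k B\<^sub>k (B\<^sup>s)\<^sub>N\<^sub>-\<^sub>k\<close>.\<close>
lemma multiplicities_Suc_bij:
  assumes "N \<le> L"
  shows "bij_betw (\<lambda>(r, k). (k, r(k := r k - 1)))
           (SIGMA r:multiplicities L (Suc s) N. {k \<in> {1..L}. 0 < r k})
           (SIGMA k:{1..N}. multiplicities L s (N - k))"
proof (rule bij_betw_byWitness[where f' = "\<lambda>(k, r). (r(k := Suc (r k)), k)"])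
  show "(\<lambda>(r, k). (k, r(k := r k - 1))) ` (SIGMA r:multiplicities L (Suc s) N. {k \<in> {1..L}. 0 < r k})
      \<subseteq> (SIGMA k:{1..N}. multiplicities L s (N - k))"
  proof clarify
    fix r k assume r: "r \<in> multiplicities L (Suc s) N" and k: "k \<in> {1..L}" "0 < r k"
    have "k \<le> k * r k" using k by simp
    also have "\<dots> \<le> (\<Sum>i=1..L. i * r i)" using k by (intro member_le_sum) auto
    finally have kN: "k \<le> N" using r by (simp add: multiplicities_def)
    have "r = (r(k := r k - 1))(k := Suc ((r(k := r k - 1)) k))" using k by auto
    then have "r(k := r k - 1) \<in> multiplicities L s (N - k)"
      using r kN fun_upd_Suc_in_multiplicities_iff[OF k(1), of "r(k := r k - 1)" s "N - k"] by simp
    then show "k \<in> {1..N} \<and> r(k := r k - 1) \<in> multiplicities L s (N - k)"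
      using k kN by simp
  qed
  show "(\<lambda>(k, r). (r(k := Suc (r k)), k)) ` (SIGMA k:{1..N}. multiplicities L s (N - k))
      \<subseteq> (SIGMA r:multiplicities L (Suc s) N. {k \<in> {1..L}. 0 < r k})"
  proof -
    have "r(k := Suc (r k)) \<in> multiplicities L (Suc s) N"
      if k: "k \<in> {1..N}" and r: "r \<in> multiplicities L s (N - k)" for k r
    proof -
      have "k \<in> {1..L}" using k assms by auto
      then show ?thesis using fun_upd_Suc_in_multiplicities_iff[of k L r s "N - k"] r k by simp
    qed
    then show ?thesis using assms by fastforce
  qed
qed auto

definition multinomial_term :: "nat \<Rightarrow> 'a::field_char_0 fps fps \<Rightarrow> (nat \<Rightarrow> nat) \<Rightarrow> 'a fps" where
  "multinomial_term L B r = (\<Prod>i=1..L. fps_const (inverse (fact (r i))) * (B $ i) ^ r i)"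

lemma multinomial_term_fun_upd_pred:
  fixes B :: "'a::field_char_0 fps fps"
  assumes k: "k \<in> {1..L}" and rk: "0 < r k"
  shows "B $ k * multinomial_term L B (r(k := r k - 1)) = of_nat (r k) * multinomial_term L B r"
proof -
  obtain j where j: "r k = Suc j" using rk by (cases "r k") auto
  let ?g = "\<lambda>i j. fps_const (inverse (fact j)) * (B $ i) ^ j"
  let ?R = "\<Prod>i\<in>{1..L}-{k}. ?g i (r i)"
  have "(of_nat (Suc j) :: 'a) * inverse (fact (Suc j)) = inverse (fact j)"
    by (simp add: field_simps del: of_nat_Suc)
  then have c: "of_nat (Suc j) * fps_const (inverse (fact (Suc j))) = (fps_const (inverse (fact j)) :: 'a fps)"
    by (metis fps_const_mult fps_of_nat)
  have "of_nat (Suc j) * ?g k (Suc j)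
      = (of_nat (Suc j) * fps_const (inverse (fact (Suc j)))) * (B $ k * (B $ k) ^ j)"
    by (simp only: power_Suc mult.assoc)
  also have "\<dots> = B $ k * ?g k j"
    unfolding c by (simp only: mult_ac)
  finally have key: "B $ k * ?g k j = of_nat (Suc j) * ?g k (Suc j)" ..
  have mt_pred: "multinomial_term L B (r(k := j)) = ?g k j * ?R"
    and mt: "multinomial_term L B r = ?g k (r k) * ?R"
    unfolding multinomial_term_def using k by (simp_all add: prod.remove)
  have "B $ k * multinomial_term L B (r(k := j)) = (B $ k * ?g k j) * ?R"
    by (simp only: mt_pred mult.assoc)
  also have "\<dots> = of_nat (r k) * multinomial_term L B r"
    by (simp only: key mt j mult.assoc)
  finally show ?thesis using j by simp
qed

lemma fps_power_nth_multinomial: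
  fixes B :: "'a::field_char_0 fps fps"
  assumes B0: "B $ 0 = 0" and "N \<le> L"
  shows "(B ^ s) $ N = fps_const (fact s) * (\<Sum>r\<in>multiplicities L s N. multinomial_term L B r)"
  using assms(2)
proof (induction s arbitrary: N)
  case 0
  show ?case by (simp add: multiplicities_0 multinomial_term_def)
next
  case (Suc s)
  let ?M = "multiplicities L"
  have "(B ^ Suc s) $ N = (\<Sum>k=1..N. B $ k * (B ^ s) $ (N - k))"
    by (simp add: fps_mult_nth sum.atLeast_Suc_atMost B0)
  also have "\<dots> = fps_const (fact s) * (\<Sum>(k, r)\<in>(SIGMA k:{1..N}. ?M s (N - k)). B $ k * multinomial_term L B r)"
    using Suc by (simp add: sum.Sigma[symmetric] finite_multiplicities sum_distrib_left algebra_simps)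
  also have "(\<Sum>(k, r)\<in>(SIGMA k:{1..N}. ?M s (N - k)). B $ k * multinomial_term L B r)
      = (\<Sum>(r, k)\<in>(SIGMA r:?M (Suc s) N. {k \<in> {1..L}. 0 < r k}). of_nat (r k) * multinomial_term L B r)"
  proof (subst sum.reindex_bij_betw[OF multiplicities_Suc_bij[OF Suc.prems], symmetric],
      intro sum.cong refl, clarify)
    fix r k assume "r \<in> ?M (Suc s) N" "k \<in> {1..L}" "0 < r k"
    then show "B $ k * multinomial_term L B (r(k := r k - 1)) = of_nat (r k) * multinomial_term L B r"
      by (metis multinomial_term_fun_upd_pred)
  qed
  also have "\<dots> = (\<Sum>r\<in>?M (Suc s) N. \<Sum>k\<in>{k \<in> {1..L}. 0 < r k}. of_nat (r k) * multinomial_term L B r)"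
    by (simp add: sum.Sigma finite_multiplicities)
  also have "\<dots> = (\<Sum>r\<in>?M (Suc s) N. of_nat (Suc s) * multinomial_term L B r)"
  proof (rule sum.cong[OF refl])
    fix r assume "r \<in> ?M (Suc s) N"
    then have "(\<Sum>k\<in>{k \<in> {1..L}. 0 < r k}. of_nat (r k)) = (of_nat (Suc s) :: 'a fps)"
      by (metis of_nat_sum sum_multiplicities_support)
    then show "(\<Sum>k\<in>{k \<in> {1..L}. 0 < r k}. of_nat (r k) * multinomial_term L B r)
        = of_nat (Suc s) * multinomial_term L B r"
      by (simp only: sum_distrib_right[symmetric])
  qed
  finally have "(B ^ Suc s) $ N
      = fps_const (fact s) * of_nat (Suc s) * (\<Sum>r\<in>?M (Suc s) N. multinomial_term L B r)"
    by (simp only: sum_distrib_left[symmetric] mult.assoc)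
  moreover have "fps_const (fact s) * of_nat (Suc s) = (fps_const (fact (Suc s)) :: 'a fps)"
    by (metis fps_const_mult fps_of_nat fact_Suc mult.commute)
  ultimately show ?case by simp
qed

lemma fps_const_sum: "fps_const (sum f A) = (\<Sum>x\<in>A. fps_const (f x :: 'b::comm_monoid_add))"
  by (induction A rule: infinite_finite_induct) (simp_all del: fps_const_add add: fps_const_add[symmetric])

lemma fps_const_prod: "fps_const (prod f A) = (\<Prod>x\<in>A. fps_const (f x :: 'b::comm_ring_1))"
  by (induction A rule: infinite_finite_induct) (simp_all del: fps_const_mult add: fps_const_mult[symmetric])

definition fps_lift :: "'b::comm_ring_1 fps \<Rightarrow> 'b fps fps" where
  "fps_lift p = Abs_fps (\<lambda>s. fps_const (p $ s))"

lemma fps_lift_nth [simp]: "fps_lift p $ s = fps_const (p $ s)"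
  by (simp add: fps_lift_def)

lemma fps_lift_1 [simp]: "fps_lift 1 = 1"
  by (rule fps_ext) simp

lemma fps_lift_add [simp]: "fps_lift (p + q) = fps_lift p + fps_lift q"
  by (rule fps_ext) simp

lemma fps_lift_X [simp]: "fps_lift fps_X = fps_X"
  by (rule fps_ext) simp

lemma fps_lift_mult [simp]: "fps_lift (p * q) = fps_lift p * fps_lift q"
  by (rule fps_ext) (simp add: fps_mult_nth fps_const_sum)

lemma fps_lift_power [simp]: "fps_lift (p ^ n) = fps_lift p ^ n"
  by (induction n) simp_all

text \<open>\<open>V\<^sup>n = \<iota>\<^sup>n (1 + \<iota>B)\<^sup>-\<^sup>n\<close>: the binomial series of exponent \<open>-n\<close> is lifted from \<open>K[[y]]\<close> to
  \<open>K[[x]][[y]]\<close> and composed with \<open>\<iota>B\<close>.\<close>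
lemma fps_inverse_power_nth:
  fixes U V B :: "'a::field_char_0 fps fps"
  assumes U0: "U $ 0 = c" and ci: "c * \<iota> = 1" and UV: "U * V = 1"
    and B: "B = U - fps_const c" and n: "n > 0"
  shows "(V ^ n) $ (n - 1) = (\<Sum>s=0..n-1.
           fps_const ((-1) ^ s * of_nat ((n - 1 + s) choose s)) * \<iota> ^ (n + s) * (B ^ s) $ (n - 1))"
proof -
  define Bi where "Bi = fps_const \<iota> * B"
  have Bi0: "Bi $ 0 = 0" by (simp add: Bi_def B U0)
  define Nb where "Nb = fps_binomial (- of_nat n :: 'a)"
  have PN: "(1 + fps_X) ^ n * Nb = 1"
    unfolding Nb_def fps_binomial_of_nat[symmetric] fps_binomial_add_mult[symmetric] by simp
  define W where "W = fps_lift Nb oo Bi"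
  have "(1 + fps_X) oo Bi = fps_const \<iota> * U"
  proof -
    have "(1 + fps_X) oo Bi = 1 + Bi" by (simp add: fps_compose_add_distrib Bi0)
    also have "\<dots> = fps_const \<iota> * fps_const c + fps_const \<iota> * B"
      using ci by (simp add: Bi_def mult.commute)
    also have "\<dots> = fps_const \<iota> * U" by (simp add: B right_diff_distrib)
    finally show ?thesis .
  qed
  then have lift_eq: "fps_lift ((1 + fps_X) ^ n) oo Bi = (fps_const \<iota> * U) ^ n"
    by (simp only: fps_lift_power fps_lift_add fps_lift_1 fps_lift_X fps_compose_power[OF Bi0, symmetric])
  have "(fps_const \<iota> * U) ^ n * W = fps_lift ((1 + fps_X) ^ n * Nb) oo Bi"
    unfolding W_def fps_lift_mult fps_compose_mult_distrib[OF Bi0] lift_eq ..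
  also have "\<dots> = 1" unfolding PN by simp
  finally have "(fps_const \<iota> * U) ^ n * W = 1" .
  then have "V ^ n = V ^ n * ((fps_const \<iota> * U) ^ n * W)" by simp
  also have "\<dots> = fps_const \<iota> ^ n * W * (U * V) ^ n" by (simp add: algebra_simps)
  finally have Vn: "V ^ n = fps_const (\<iota> ^ n) * W" using UV by simp
  have "Nb $ s = (-1) ^ s * of_nat ((n - 1 + s) choose s)" for s
    unfolding Nb_def fps_binomial_nth gbinomial_minus binomial_gbinomial using n by simp
  then have "(V ^ n) $ (n - 1) = \<iota> ^ n * (\<Sum>s=0..n-1.
      fps_const ((-1) ^ s * of_nat ((n - 1 + s) choose s)) * \<iota> ^ s * (B ^ s) $ (n - 1))"
    by (simp add: Vn W_def fps_compose_nth Bi_def power_mult_distrib mult.assoc)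
  then show ?thesis
    by (simp add: sum_distrib_left power_add mult.assoc mult.left_commute)
qed

lemma sum_atLeast1_Suc: "(\<Sum>i=1..Suc p. f i) = f 1 + (\<Sum>i=1..p. f (Suc i) :: 'b::comm_monoid_add)"
  by (simp add: sum.atLeast_Suc_atMost add.assoc flip: sum.shift_bounds_cl_Suc_ivl)

lemma prod_atLeast1_Suc: "(\<Prod>i=1..Suc p. f i) = f 1 * (\<Prod>i=1..p. f (Suc i) :: 'b::comm_monoid_mult)"
  by (simp add: prod.atLeast_Suc_atMost mult.assoc flip: prod.shift_bounds_cl_Suc_ivl)

lemma prod_atLeast2_Suc: "(\<Prod>i=2..Suc p. f i) = (\<Prod>i=1..p. f (Suc i) :: 'b::comm_monoid_mult)"
  using prod.shift_bounds_cl_Suc_ivl[of f 1 p] by (simp add: numeral_2_eq_2)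

text \<open>An index \<open>r \<in> A_idx (p + 1)\<close> is determined by its tail \<open>(r\<^sub>2, \<dots>, r\<^sub>p\<^sub>+\<^sub>1)\<close>, the multiplicity
  vector of a partition of \<open>p\<close> into \<open>s = p - r\<^sub>1\<close> parts.\<close>
definition prepend_mult :: "nat \<Rightarrow> nat \<Rightarrow> (nat \<Rightarrow> nat) \<Rightarrow> nat \<Rightarrow> nat" where
  "prepend_mult p s r' = (\<lambda>i. if i = 1 then p - s else if 2 \<le> i \<and> i \<le> Suc p then r' (i - 1) else 0)"

definition tail_mult :: "nat \<Rightarrow> (nat \<Rightarrow> nat) \<Rightarrow> nat \<Rightarrow> nat" where
  "tail_mult p r = (\<lambda>i. if 1 \<le> i \<and> i \<le> p then r (Suc i) else 0)"

lemma prepend_mult_Suc: "i \<in> {1..p} \<Longrightarrow> prepend_mult p s r' (Suc i) = r' i"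
  by (auto simp: prepend_mult_def)

lemma prepend_mult_in_A_idx:
  assumes s: "s \<le> p" and r': "r' \<in> multiplicities p s p"
  shows "prepend_mult p s r' \<in> A_idx (Suc p)"
proof -
  let ?r = "prepend_mult p s r'"
  have r1: "?r 1 = p - s" by (simp add: prepend_mult_def)
  have "(\<Sum>i=1..p. g i (?r (Suc i))) = (\<Sum>i=1..p. g i (r' i))" for g :: "nat \<Rightarrow> nat \<Rightarrow> nat"
    by (intro sum.cong refl) (simp add: prepend_mult_Suc)
  from this[of "\<lambda>i j. j"] this[of "\<lambda>i j. Suc i * j"]
  have "(\<Sum>i=1..Suc p. ?r i) = (p - s) + (\<Sum>i=1..p. r' i)"
    and "(\<Sum>i=1..Suc p. i * ?r i) = (p - s) + (\<Sum>i=1..p. i * r' i) + (\<Sum>i=1..p. r' i)"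
    unfolding sum_atLeast1_Suc by (simp_all add: r1[unfolded One_nat_def] sum.distrib)
  moreover have "\<forall>i. i \<notin> {1..Suc p} \<longrightarrow> ?r i = 0" by (auto simp: prepend_mult_def)
  ultimately show ?thesis
    using r' s by (simp add: A_idx_def multiplicities_def)
qed

lemma tail_mult_in_multiplicities:
  assumes r: "r \<in> A_idx (Suc p)"
  shows "r 1 \<le> p" and "tail_mult p r \<in> multiplicities p (p - r 1) p"
proof -
  have sums: "(\<Sum>i=1..Suc p. r i) = p" "(\<Sum>i=1..Suc p. i * r i) = 2 * p"
    using r by (auto simp: A_idx_def)
  then show "r 1 \<le> p" unfolding sum_atLeast1_Suc by simp
  have "(\<Sum>i=1..p. g i (tail_mult p r i)) = (\<Sum>i=1..p. g i (r (Suc i)))" for g :: "nat \<Rightarrow> nat \<Rightarrow> nat"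
    by (intro sum.cong refl) (simp add: tail_mult_def)
  from this[of "\<lambda>i j. j"] this[of "\<lambda>i j. i * j"] sums
  show "tail_mult p r \<in> multiplicities p (p - r 1) p"
    unfolding sum_atLeast1_Suc by (auto simp: multiplicities_def tail_mult_def sum.distrib)
qed

lemma A_idx_Suc_bij:
  "bij_betw (\<lambda>(s, r'). prepend_mult p s r') (SIGMA s:{0..p}. multiplicities p s p) (A_idx (Suc p))"
proof (rule bij_betw_byWitness[where f' = "\<lambda>r. (p - r 1, tail_mult p r)"])
  show "\<forall>x\<in>SIGMA s:{0..p}. multiplicities p s p.
      (\<lambda>r. (p - r 1, tail_mult p r)) ((\<lambda>(s, r'). prepend_mult p s r') x) = x"
    by (auto simp: tail_mult_def prepend_mult_def multiplicities_def fun_eq_iff)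
  show "\<forall>r\<in>A_idx (Suc p). (\<lambda>(s, r'). prepend_mult p s r') ((\<lambda>r. (p - r 1, tail_mult p r)) r) = r"
    using tail_mult_in_multiplicities(1) by (auto simp: tail_mult_def prepend_mult_def A_idx_def fun_eq_iff)
  show "(\<lambda>(s, r'). prepend_mult p s r') ` (SIGMA s:{0..p}. multiplicities p s p) \<subseteq> A_idx (Suc p)"
    using prepend_mult_in_A_idx by auto
  show "(\<lambda>r. (p - r 1, tail_mult p r)) ` A_idx (Suc p) \<subseteq> (SIGMA s:{0..p}. multiplicities p s p)"
    using tail_mult_in_multiplicities by auto
qed

lemma fact_inverse_power_nth_multinomial:
  fixes U V :: "'a::field_char_0 fps fps"
  assumes U0: "U $ 0 = c" and ci: "c * \<iota> = 1" and UV: "U * V = 1"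
  shows "fps_const (fact p) * (V ^ Suc p) $ p = (\<Sum>s=0..p. \<Sum>r\<in>multiplicities p s p.
           fps_const ((-1) ^ s * fact (p + s)) * \<iota> ^ (Suc p + s) * multinomial_term p (U - fps_const c) r)"
proof -
  let ?B = "U - fps_const c"
  have B0: "?B $ 0 = 0" by (simp add: U0)
  have coeff: "fps_const (fact p) * (fps_const ((-1) ^ s * of_nat ((p + s) choose s)) * fps_const (fact s))
      = (fps_const ((-1) ^ s * fact (p + s)) :: 'a fps)" for s
  proof -
    have "fact p * fact s * ((p + s) choose s) = fact (p + s)"
      using binomial_fact_lemma[of s "p + s"] by (simp add: algebra_simps)
    then have "(fact p * fact s * of_nat ((p + s) choose s) :: 'a) = fact (p + s)"
      by (metis of_nat_fact of_nat_mult)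
    then have "(fact p * ((-1) ^ s * of_nat ((p + s) choose s) * fact s) :: 'a) = (-1) ^ s * fact (p + s)"
      by (metis mult.commute mult.left_commute)
    then show ?thesis by (simp only: fps_const_mult)
  qed
  have "fps_const (fact p) * (V ^ Suc p) $ p = (\<Sum>s=0..p. fps_const (fact p) *
      (fps_const ((-1) ^ s * of_nat ((p + s) choose s)) * \<iota> ^ (Suc p + s) * (?B ^ s) $ p))"
    using fps_inverse_power_nth[OF U0 ci UV refl, of "Suc p"] by (simp add: sum_distrib_left)
  also have "\<dots> = (\<Sum>s=0..p. fps_const ((-1) ^ s * fact (p + s)) * \<iota> ^ (Suc p + s) *
      (\<Sum>r\<in>multiplicities p s p. multinomial_term p ?B r))"
    unfolding fps_power_nth_multinomial[OF B0 le_refl] coeff[symmetric] by (simp only: mult_ac)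
  finally show ?thesis by (simp add: sum_distrib_left)
qed

definition A1_term :: "nat \<Rightarrow> (nat \<Rightarrow> 'a::field_char_0 fps) \<Rightarrow> (nat \<Rightarrow> nat) \<Rightarrow> 'a fps" where
  "A1_term n X r = fps_const ((-1) ^ (n - 1 - r 1) * fact (2 * n - 2 - r 1) /
     (\<Prod>i=2..n. fact (r i) * fact i ^ r i)) * (\<Prod>i=1..n. X i ^ r i)"

lemma A1_eq_sum_A1_term: "A1 n X = inverse (X 1) ^ (2 * n - 1) * (\<Sum>r\<in>A_idx n. A1_term n X r)"
  by (simp add: A1_def A1_term_def)

lemma A1_term_prepend_mult:
  fixes \<phi> :: "nat \<Rightarrow> 'a::field_char_0 fps"
  assumes ci: "\<phi> 1 * \<iota> = 1" and s: "s \<le> p"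
    and B: "\<And>i. i \<ge> 1 \<Longrightarrow> B $ i = \<phi> (Suc i) * fps_const (inverse (fact (Suc i)))"
  shows "\<iota> ^ (2 * Suc p - 1) * A1_term (Suc p) \<phi> (prepend_mult p s r)
    = fps_const ((-1) ^ s * fact (p + s)) * \<iota> ^ (Suc p + s) * multinomial_term p B r"
proof -
  let ?n = "Suc p" and ?r = "prepend_mult p s r"
  let ?c = "\<Prod>i=1..p. inverse (fact (r i)) * inverse (fact (Suc i)) ^ r i :: 'a"
  have r1: "?r 1 = p - s" by (simp add: prepend_mult_def)
  have P1: "(\<Prod>i=2..?n. fact (?r i) * fact i ^ ?r i) = (\<Prod>i=1..p. fact (r i) * fact (Suc i) ^ r i :: 'a)"
    unfolding prod_atLeast2_Suc by (rule prod.cong) (auto simp: prepend_mult_Suc)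
  have P2: "(\<Prod>i=1..?n. \<phi> i ^ ?r i) = \<phi> 1 ^ (p - s) * (\<Prod>i=1..p. \<phi> (Suc i) ^ r i)"
    unfolding prod_atLeast1_Suc r1 by (auto intro: prod.cong simp: prepend_mult_Suc)
  have "inverse (\<Prod>i=1..p. fact (r i) * fact (Suc i) ^ r i :: 'a)
      = (\<Prod>i=1..p. inverse (fact (r i) * fact (Suc i) ^ r i))"
    by (simp only: prod_inversef[symmetric] o_def)
  then have "inverse (\<Prod>i=1..p. fact (r i) * fact (Suc i) ^ r i :: 'a) = ?c"
    by (simp only: inverse_mult_distrib power_inverse)
  moreover have "?n - 1 - ?r 1 = s" "2 * ?n - 2 - ?r 1 = p + s" using r1 s by auto
  ultimately have C: "(-1) ^ (?n - 1 - ?r 1) * fact (2 * ?n - 2 - ?r 1)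
      / (\<Prod>i=1..p. fact (r i) * fact (Suc i) ^ r i) = (-1) ^ s * fact (p + s) * ?c"
    by (simp add: divide_inverse)
  have "2 * ?n - 1 = (?n + s) + (p - s)" using s by simp
  then have "\<iota> ^ (2 * ?n - 1) * \<phi> 1 ^ (p - s) = \<iota> ^ (?n + s) * (\<phi> 1 * \<iota>) ^ (p - s)"
    by (simp only: power_add power_mult_distrib mult_ac)
  then have io: "\<iota> ^ (2 * ?n - 1) * \<phi> 1 ^ (p - s) = \<iota> ^ (?n + s)"
    using ci by simp
  have M: "multinomial_term p B r = fps_const ?c * (\<Prod>i=1..p. \<phi> (Suc i) ^ r i)"
    unfolding multinomial_term_def fps_const_prod prod.distrib[symmetric]
    by (rule prod.cong) (auto simp: B algebra_simps)
  have "\<iota> ^ (2 * ?n - 1) * A1_term ?n \<phi> ?r = fps_const ((-1) ^ s * fact (p + s) * ?c) *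
      (\<iota> ^ (2 * ?n - 1) * \<phi> 1 ^ (p - s)) * (\<Prod>i=1..p. \<phi> (Suc i) ^ r i)"
    unfolding A1_term_def P1 P2 C by (simp only: mult_ac)
  then show ?thesis unfolding io M by (simp only: fps_const_mult mult_ac)
qed

lemma A1_eq_multinomial_sum:
  fixes \<phi> :: "nat \<Rightarrow> 'a::field_char_0 fps"
  assumes \<phi>1: "\<phi> 1 $ 0 \<noteq> 0"
    and B: "\<And>i. i \<ge> 1 \<Longrightarrow> B $ i = \<phi> (Suc i) * fps_const (inverse (fact (Suc i)))"
  shows "A1 (Suc p) \<phi> = (\<Sum>s=0..p. \<Sum>r\<in>multiplicities p s p.
           fps_const ((-1) ^ s * fact (p + s)) * inverse (\<phi> 1) ^ (Suc p + s) * multinomial_term p B r)"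
proof -
  have ci: "\<phi> 1 * inverse (\<phi> 1) = 1" using inverse_mult_eq_1'[OF \<phi>1] .
  have "A1 (Suc p) \<phi> = (\<Sum>(s, r)\<in>(SIGMA s:{0..p}. multiplicities p s p).
      inverse (\<phi> 1) ^ (2 * Suc p - 1) * A1_term (Suc p) \<phi> (prepend_mult p s r))"
    unfolding A1_eq_sum_A1_term sum_distrib_left
    by (subst sum.reindex_bij_betw[OF A_idx_Suc_bij, symmetric]) (simp add: case_prod_unfold)
  also have "\<dots> = (\<Sum>(s, r)\<in>(SIGMA s:{0..p}. multiplicities p s p).
      fps_const ((-1) ^ s * fact (p + s)) * inverse (\<phi> 1) ^ (Suc p + s) * multinomial_term p B r)"
  proof (intro sum.cong refl, clarify)
    fix s r assume "s \<in> {0..p}"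
    then show "inverse (\<phi> 1) ^ (2 * Suc p - 1) * A1_term (Suc p) \<phi> (prepend_mult p s r)
        = fps_const ((-1) ^ s * fact (p + s)) * inverse (\<phi> 1) ^ (Suc p + s) * multinomial_term p B r"
      by (intro A1_term_prepend_mult[OF ci _ B]) auto
  qed
  finally show ?thesis by (simp add: sum.Sigma finite_multiplicities)
qed

definition egf_series :: "(nat \<Rightarrow> 'a::field_char_0 fps) \<Rightarrow> 'a fps fps" where
  "egf_series \<phi> = Abs_fps (\<lambda>k. if k = 0 then 0 else \<phi> k * fps_const (inverse (fact k)))"

lemma fps_comp_inverse_nth_A1:
  fixes \<phi> :: "nat \<Rightarrow> 'a::field_char_0 fps"
  assumes \<phi>1: "\<phi> 1 $ 0 \<noteq> 0" and k: "k \<ge> 1"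
  shows "fps_comp_inverse (egf_series \<phi>) (inverse (\<phi> 1)) $ k = fps_const (inverse (fact k)) * A1 k \<phi>"
proof -
  define G where "G = egf_series \<phi>"
  define \<iota> where "\<iota> = inverse (\<phi> 1)"
  have ci: "\<phi> 1 * \<iota> = 1" unfolding \<iota>_def using inverse_mult_eq_1'[OF \<phi>1] .
  define h where "h = fps_comp_inverse G \<iota>"
  define U where "U = Abs_fps (\<lambda>k. G $ Suc k)"
  have GU: "G = fps_X * U"
  proof (rule fps_ext)
    fix k show "G $ k = (fps_X * U) $ k"
      by (cases k) (simp_all add: G_def egf_series_def U_def del: fact_Suc)
  qed
  have Gh: "G oo h = fps_X"
    unfolding h_def by (rule fps_comp_inverse_right) (use ci in \<open>simp_all add: G_def egf_series_def\<close>)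
  have U0: "U $ 0 = \<phi> 1" by (simp add: U_def G_def egf_series_def)
  define V where "V = fps_right_inverse U \<iota>"
  have UV: "U * V = 1" unfolding V_def by (rule fps_right_inverse) (subst U0, rule ci)
  obtain p where p: "k = Suc p" using k by (cases k) auto
  have "A1 k \<phi> = fps_const (fact p) * (V ^ k) $ p"
    unfolding p fact_inverse_power_nth_multinomial[OF U0 ci UV] \<iota>_def
    by (rule A1_eq_multinomial_sum[where \<phi> = \<phi>, OF \<phi>1]) (simp add: U_def G_def egf_series_def)
  also have "\<dots> = fps_const (fact p) * of_nat k * h $ k"
    using fps_lagrange_inversion[OF GU UV _ Gh, of k] p by (simp add: h_def mult.assoc)
  also have "fps_const (fact p) * of_nat k = (fps_const (fact k) :: 'a fps)"
    unfolding p by (metis fps_const_mult fps_of_nat fact_Suc mult.commute)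
  finally show ?thesis by (simp add: h_def \<iota>_def G_def)
qed

lemma subst2_eq_fps_eval_at: "subst2 F Y = phi F 0 + fps_eval_at (egf_series (phi F)) Y"
proof (rule fps_ext)
  fix m
  let ?t = "\<lambda>n. (phi F n * Y ^ n * fps_const (inverse (fact n))) $ m"
  have "subst2 F Y $ m = ?t 0 + (\<Sum>n=1..m. ?t n)"
    by (simp add: subst2_def atLeast0AtMost[symmetric] sum.atLeast_Suc_atMost)
  also have "(\<Sum>n=1..m. ?t n) = fps_eval_at (egf_series (phi F)) Y $ m"
    by (simp add: fps_eval_at_def fps_sum_nth egf_series_def sum.atLeast_Suc_atMost mult_ac)
  finally show "subst2 F Y $ m = (phi F 0 + fps_eval_at (egf_series (phi F)) Y) $ m"
    by simp
qed

lemma subst2_eq_0_imp_eq_fps_eval_at: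
  fixes F :: "nat \<Rightarrow> nat \<Rightarrow> 'a::field_char_0" and Y :: "'a fps"
  assumes "F 0 1 \<noteq> 0" and Y0: "Y $ 0 = 0" and "subst2 F Y = 0"
  shows "Y = fps_eval_at (fps_comp_inverse (egf_series (phi F)) (inverse (phi F 1))) (- phi F 0)"
proof -
  let ?G = "egf_series (phi F)"
  have G0: "?G $ 0 = 0" by (simp add: egf_series_def)
  have "phi F 1 $ 0 \<noteq> 0" using assms(1) by (simp add: phi_def efps_def)
  then have "?G $ 1 * inverse (phi F 1) = 1"
    using inverse_mult_eq_1' by (simp add: egf_series_def)
  then have "fps_comp_inverse ?G (inverse (phi F 1)) oo ?G = fps_X"
    by (rule fps_comp_inverse_left[OF G0])
  moreover have "fps_eval_at ?G Y = - phi F 0"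
    using assms(3) subst2_eq_fps_eval_at[of F Y] by (simp add: eq_neg_iff_add_eq_0 add.commute)
  ultimately show ?thesis
    by (metis Y0 G0 fps_eval_at_X fps_eval_at_compose)
qed

lemma bell_poly_eq_0: "n < k \<Longrightarrow> bell_poly n k X = 0"
  by (simp add: bell_poly_def startsby_zero_power_prefix)

lemma phi_0_power_nth:
  assumes "F 0 0 = 0"
  shows "(phi F 0 ^ k) $ n = fact k / fact n * bell_poly n k (\<lambda>i. F i 0)"
proof -
  have "phi F 0 = Abs_fps (\<lambda>i. if i = 0 then 0 else F i 0 / fact i)"
    by (rule fps_ext) (simp add: phi_def efps_def assms)
  then show ?thesis by (simp add: bell_poly_def)
qed

lemma fps_eval_at_nth_eq_sum:
  assumes "h $ 0 = 0"
  shows "fps_eval_at h S $ m = (\<Sum>k=1..m. (h $ k * S ^ k) $ m)"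
  using assms by (simp add: fps_eval_at_def fps_sum_nth sum.atLeast_Suc_atMost)

lemma fact_mult_fps_eval_at_comp_inverse_nth:
  fixes F :: "nat \<Rightarrow> nat \<Rightarrow> 'a::field_char_0"
  assumes F00: "F 0 0 = 0" and F01: "F 0 1 \<noteq> 0"
  shows "fact m * fps_eval_at (fps_comp_inverse (egf_series (phi F)) (inverse (phi F 1))) (- phi F 0) $ m
    = (\<Sum>k=1..m. \<Sum>n=0..m. (-1) ^ k * of_nat (m choose n) * a_coeff F k (m - n) * bell_poly n k (\<lambda>i. F i 0))"
proof -
  let ?h = "fps_comp_inverse (egf_series (phi F)) (inverse (phi F 1))"
  have \<phi>1: "phi F 1 $ 0 \<noteq> 0" using F01 by (simp add: phi_def efps_def)
  have "fact m * (?h $ k * (- phi F 0) ^ k) $ m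
      = (\<Sum>n=0..m. (-1) ^ k * of_nat (m choose n) * a_coeff F k (m - n) * bell_poly n k (\<lambda>i. F i 0))"
    if k: "k \<ge> 1" for k
  proof -
    have "?h $ k * (- phi F 0) ^ k = fps_const (inverse (fact k)) * ((- phi F 0) ^ k * A1 k (phi F))"
      unfolding fps_comp_inverse_nth_A1[where \<phi> = "phi F", OF \<phi>1 k] by (simp only: mult_ac)
    then have "fact m * (?h $ k * (- phi F 0) ^ k) $ m
        = fact m * (fps_const (inverse (fact k)) * ((- phi F 0) ^ k * A1 k (phi F))) $ m"
      by (simp only:)
    also have "\<dots> = (\<Sum>n=0..m. fact m / fact k * (((- phi F 0) ^ k) $ n * A1 k (phi F) $ (m - n)))"
      unfolding fps_mult_left_const_nth fps_mult_nth[of "(- phi F 0) ^ k"]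
      by (simp add: sum_distrib_left divide_inverse mult_ac)
    also have "\<dots> = (\<Sum>n=0..m. (-1) ^ k * of_nat (m choose n) * a_coeff F k (m - n) * bell_poly n k (\<lambda>i. F i 0))"
    proof (intro sum.cong refl)
      fix n assume "n \<in> {0..m}"
      then have mc: "(of_nat (m choose n) :: 'a) = fact m / (fact n * fact (m - n))"
        by (simp add: binomial_fact)
      have sk: "((- phi F 0) ^ k) $ n = (-1) ^ k * (fact k / fact n * bell_poly n k (\<lambda>i. F i 0))"
      proof -
        have "(-1 :: 'a fps) ^ k = fps_const ((-1) ^ k)"
          by (metis fps_const_neg fps_const_1_eq_1 fps_const_power)
        then show ?thesis by (simp add: power_minus[of "phi F 0"] phi_0_power_nth[where F = F, OF F00])
      qed
      show "fact m / fact k * (((- phi F 0) ^ k) $ n * A1 k (phi F) $ (m - n))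
          = (-1) ^ k * of_nat (m choose n) * a_coeff F k (m - n) * bell_poly n k (\<lambda>i. F i 0)"
        unfolding sk mc a_coeff_def by (simp add: field_simps)
    qed
    finally show ?thesis .
  qed
  then show ?thesis by (simp add: fps_eval_at_nth_eq_sum sum_distrib_left)
qed

theorem mainTheorem1:
  fixes F :: "nat \<Rightarrow> nat \<Rightarrow> 'a::field_char_0" and Y :: "'a fps"
  assumes "F 0 0 = 0" and "F 0 1 \<noteq> 0"
    and "fps_nth Y 0 = 0" and "subst2 F Y = 0"
  shows "\<forall>m\<ge>1. fact m * fps_nth Y m =
     (\<Sum>n=1..m. of_nat (m choose n) *
        (\<Sum>k=1..n. (-1) ^ k * a_coeff F k (m - n) * bell_poly n k (\<lambda>i. F i 0)))"
proof (intro allI impI)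
  fix m :: nat assume "m \<ge> 1"
  let ?g = "\<lambda>k n. (-1) ^ k * of_nat (m choose n) * a_coeff F k (m - n) * bell_poly n k (\<lambda>i. F i 0)"
  have "fact m * Y $ m = (\<Sum>k=1..m. \<Sum>n=0..m. ?g k n)"
    using subst2_eq_0_imp_eq_fps_eval_at[OF assms(2-4)] fact_mult_fps_eval_at_comp_inverse_nth[where F = F, OF assms(1,2)]
    by simp
  also have "\<dots> = (\<Sum>n=0..m. \<Sum>k=1..m. ?g k n)"
    by (rule sum.swap)
  also have "\<dots> = (\<Sum>n=1..m. \<Sum>k=1..m. ?g k n)"
    by (simp add: sum.atLeast_Suc_atMost bell_poly_eq_0)
  also have "\<dots> = (\<Sum>n=1..m. \<Sum>k=1..n. ?g k n)"
    by (intro sum.cong refl sum.mono_neutral_right) (auto simp: bell_poly_eq_0)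
  finally show "fact m * Y $ m = (\<Sum>n=1..m. of_nat (m choose n) *
      (\<Sum>k=1..n. (-1) ^ k * a_coeff F k (m - n) * bell_poly n k (\<lambda>i. F i 0)))"
    by (simp add: sum_distrib_left mult_ac)
qed

end
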